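(* Let $C$ be a free $E$-linear code of length $2n$ and rank $k$ whose symplectic hull-rank is $l$. Let $G$ be a $k\times 2n$ binary generator matrix of $C_{Res}$ with rows $r_i=(c_{i,1},\dots,c_{i,n}\,|\,d_{i,1},\dots,d_{i,n})$, $1\le i\le k$, and let $x=(a|b)=(a_1,\dots,a_n\,|\,b_1,\dots,b_n)\in\mathbb{F}_2^{2n}$ satisfy $\langle x,r_i\rangle_s=0$ for all $1\le i\le k$. (a) The $(k+1)\times(2n+2)$ matrix $G'$ over $E$ whose first row is $(\kappa,\kappa a_1,\dots,\kappa a_n,\kappa,\kappa b_1,\dots,\kappa b_n)$ and whose $(i+1)$-th row, $1\le i\le k$, is $(0,\kappa c_{i,1},\dots,\kappa c_{i,n},0,\kappa d_{i,1},\dots,\kappa d_{i,n})$ generates a free $E$-linear code $D$ of length $2n+2$ and rank $k+1$ with symplectic hull-rank $l+1$. (b) Let $m=2n-k$ and let $H$ be an $m\times 2n$ binary parity-check matrix of $C_{Res}$ (i.e. a generator matrix of $(C_{Res})^{\perp_S}$) with rows $s_j=(s_{j,1},\dots,s_{j,n}\,|\,t_{j,1},\dots,t_{j,n})$. Let $y=(u|v)=(u_1,\dots,u_n\,|\,v_1,\dots,v_n)\in (C_{Res})^{\perp_S}$, $\delta=\langle x,y\rangle_s\in\mathbb{F}_2$, and $z_j=\langle x,s_j\rangle_s\in\mathbb{F}_2$ for $1\le j\le m$. Then the $(m+1)\times(2n+2)$ matrix $H'$ over $E$ whose first row is $(\kappa,\kappa u_1,\dots,\kappa u_n,\kappa(1+\delta),\kappa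 v_1,\dots,\kappa v_n)$ and whose $(j+1)$-th row, $1\le j\le m$, is $(0,\kappa s_{j,1},\dots,\kappa s_{j,n},\kappa z_j,\kappa t_{j,1},\dots,\kappa t_{j,n})$ is a parity-check matrix of $D$, i.e. a generator matrix of $D^{\perp_S}$.
   Context: $E=\langle \kappa,\tau \mid 2\kappa=2\tau=0,\ \kappa^2=\kappa,\ \tau^2=\tau,\ \kappa\tau=\kappa,\ \tau\kappa=\tau\rangle$ is the non-unital ring $\{0,\kappa,\tau,\zeta\}$, $\zeta=\kappa+\tau$, with $e\kappa=e\tau=e$, $e\zeta=0$ for all $e\in E$. Every $e\in E$ is uniquely $u\kappa+v\zeta$ ($u,v\in\mathbb{F}_2$); $\pi(u\kappa+v\zeta)=u$, componentwise. For $c\in\mathbb{F}_2$, $\kappa c$ means $\kappa$ if $c=1$ and $0$ if $c=0$. An $E$-linear code of length $N$ is a left $E$-submodule $C\subseteq E^{N}$; $C_{Res}=\pi(C)$, $C_{Tor}=\{v\in\mathbb{F}_2^{N}:\zeta v\in C\}$ (componentwise); $C$ is free if $C_{Res}=C_{Tor}$. For $X=\{x_1,\dots,x_k\}\subseteq E^{N}$, $\langle X\rangle_E=\{\sum e_jx_j:e_j\in E\}$, $\langle X\rangle_{\mathbb{F}_2}=\{\sum u_jx_j:u_j\in\mathbb{F}_2\}$; $X$ generates $C$ if $C=\langle X\rangle_E\cup\langle X\rangle_{\mathbb{F}_2}$; a matrix whose rows form a generating set is a generator matrix. The rank of a free code is the cardinality of a minimal generating set. Symplectic inner product on $E^{2n}$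 or $\mathbb{F}_2^{2n}$: for $x=(u|v),y=(u'|v')$ with halves of length $n$, $\langle x,y\rangle_s=\sum_i u_iv'_i+\sum_iv_iu'_i$. For binary $B$, $B^{\perp_S}=\{z:\langle z,w\rangle_s=0\ \forall w\in B\}$. For $E$-linear $C$: $C^{\perp_S}=\{z\in E^{2n}:\langle z,w\rangle_s=\langle w,z\rangle_s=0\ \forall w\in C\}$ and $SHull(C)=C\cap C^{\perp_S}$; for free $C$, $SHull(C)$ is free and the symplectic hull-rank of $C$ is $\mathrm{rank}(SHull(C))$. A parity-check matrix of $C$ is a generator matrix of $C^{\perp_S}$. *)

theory Defs
  imports Main "HOL-Library.Z2" "HOL-Library.Function_Algebras"
begin

datatype E = E0 | Kap | Tau | Zet

instantiation E :: comm_monoid_add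
begin
definition zero_E :: E where "zero_E = E0"
fun plus_E :: "E \<Rightarrow> E \<Rightarrow> E" where
  "plus_E E0 y = y"
| "plus_E x E0 = x"
| "plus_E Kap Kap = E0" | "plus_E Kap Tau = Zet" | "plus_E Kap Zet = Tau"
| "plus_E Tau Kap = Zet" | "plus_E Tau Tau = E0" | "plus_E Tau Zet = Kap"
| "plus_E Zet Kap = Tau" | "plus_E Zet Tau = Kap" | "plus_E Zet Zet = E0"
instance
proof
  fix a b c :: E
  show "a + b + c = a + (b + c)" by (cases a; cases b; cases c) simp_all
  show "a + b = b + a" by (cases a; cases b) simp_all
  show "0 + a = a" by (simp add: zero_E_def)
qed
end

instantiation E :: times
begin
fun times_E :: "E \<Rightarrow> E \<Rightarrow> E" where
  "times_E x Kap = x"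
| "times_E x Tau = x"
| "times_E x Zet = E0"
| "times_E x E0 = E0"
instance ..
end

text \<open>Residue map pi(u kappa + v zeta) = u.\<close>
fun piE :: "E \<Rightarrow> bit" where
  "piE E0 = 0" | "piE Kap = 1" | "piE Tau = 1" | "piE Zet = 0"

definition emb :: "E \<Rightarrow> bit \<Rightarrow> E" where
  "emb e c = (if c = 1 then e else 0)"

definition Evecs :: "nat \<Rightarrow> (nat \<Rightarrow> E) set" where
  "Evecs N = {v. \<forall>i\<ge>N. v i = 0}"

definition Bvecs :: "nat \<Rightarrow> (nat \<Rightarrow> bit) set" where
  "Bvecs N = {v. \<forall>i\<ge>N. v i = 0}"

definition Esmult :: "E \<Rightarrow> (nat \<Rightarrow> E) \<Rightarrow> (nat \<Rightarrow> E)" where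
  "Esmult e v = (\<lambda>i. e * v i)"

definition Bsmult_E :: "bit \<Rightarrow> (nat \<Rightarrow> E) \<Rightarrow> (nat \<Rightarrow> E)" where
  "Bsmult_E u v = (\<lambda>i. if u = 1 then v i else 0)"

definition embv :: "E \<Rightarrow> (nat \<Rightarrow> bit) \<Rightarrow> (nat \<Rightarrow> E)" where
  "embv e v = (\<lambda>i. emb e (v i))"

definition piv :: "(nat \<Rightarrow> E) \<Rightarrow> (nat \<Rightarrow> bit)" where
  "piv v = (\<lambda>i. piE (v i))"

definition E_linear_code :: "nat \<Rightarrow> (nat \<Rightarrow> E) set \<Rightarrow> bool" where
  "E_linear_code N C \<longleftrightarrow> C \<subseteq> Evecs N \<and> 0 \<in> C \<and>
     (\<forall>x\<in>C. \<forall>y\<in>C. x + y \<in> C) \<and> (\<forall>e. \<forall>x\<in>C. Esmult e x \<in> C)"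

definition C_Res :: "(nat \<Rightarrow> E) set \<Rightarrow> (nat \<Rightarrow> bit) set" where
  "C_Res C = piv ` C"

definition C_Tor :: "nat \<Rightarrow> (nat \<Rightarrow> E) set \<Rightarrow> (nat \<Rightarrow> bit) set" where
  "C_Tor N C = {v \<in> Bvecs N. embv Zet v \<in> C}"

definition free_code :: "nat \<Rightarrow> (nat \<Rightarrow> E) set \<Rightarrow> bool" where
  "free_code N C \<longleftrightarrow> C_Res C = C_Tor N C"

definition spanE :: "(nat \<Rightarrow> E) set \<Rightarrow> (nat \<Rightarrow> E) set" where
  "spanE X = {(\<Sum>x\<in>X. Esmult (c x) x) | c. True}"

definition spanF2_E :: "(nat \<Rightarrow> E) set \<Rightarrow> (nat \<Rightarrow> E) set" where
  "spanF2_E X = {(\<Sum>x\<in>X. Bsmult_E (c x) x) | c. True}"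

definition gen_code :: "(nat \<Rightarrow> E) set \<Rightarrow> (nat \<Rightarrow> E) set" where
  "gen_code X = spanE X \<union> spanF2_E X"

definition generates :: "(nat \<Rightarrow> E) set \<Rightarrow> (nat \<Rightarrow> E) set \<Rightarrow> bool" where
  "generates X C \<longleftrightarrow> finite X \<and> C = gen_code X"

definition E_gen_matrix :: "nat \<Rightarrow> (nat \<Rightarrow> nat \<Rightarrow> E) \<Rightarrow> (nat \<Rightarrow> E) set \<Rightarrow> bool" where
  "E_gen_matrix k M C \<longleftrightarrow> generates (M ` {..<k}) C"

definition rank_code :: "nat \<Rightarrow> (nat \<Rightarrow> E) set \<Rightarrow> nat" where
  "rank_code N C = (LEAST r. \<exists>X. X \<subseteq> Evecs N \<and> generates X C \<and> card X = r)"

definition sipE :: "nat \<Rightarrow> (nat \<Rightarrow> E) \<Rightarrow> (nat \<Rightarrow> E) \<Rightarrow> E" where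
  "sipE n x y = (\<Sum>i<n. x i * y (n + i)) + (\<Sum>i<n. x (n + i) * y i)"

definition sipB :: "nat \<Rightarrow> (nat \<Rightarrow> bit) \<Rightarrow> (nat \<Rightarrow> bit) \<Rightarrow> bit" where
  "sipB n x y = (\<Sum>i<n. x i * y (n + i)) + (\<Sum>i<n. x (n + i) * y i)"

definition sdualE :: "nat \<Rightarrow> (nat \<Rightarrow> E) set \<Rightarrow> (nat \<Rightarrow> E) set" where
  "sdualE n C = {z \<in> Evecs (2*n). \<forall>w\<in>C. sipE n z w = 0 \<and> sipE n w z = 0}"

definition sdualB :: "nat \<Rightarrow> (nat \<Rightarrow> bit) set \<Rightarrow> (nat \<Rightarrow> bit) set" where
  "sdualB n B = {z \<in> Bvecs (2*n). \<forall>w\<in>B. sipB n z w = 0}"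

definition SHull :: "nat \<Rightarrow> (nat \<Rightarrow> E) set \<Rightarrow> (nat \<Rightarrow> E) set" where
  "SHull n C = C \<inter> sdualE n C"

definition hull_rank :: "nat \<Rightarrow> (nat \<Rightarrow> E) set \<Rightarrow> nat" where
  "hull_rank n C = rank_code (2*n) (SHull n C)"

definition spanB :: "(nat \<Rightarrow> bit) set \<Rightarrow> (nat \<Rightarrow> bit) set" where
  "spanB X = {(\<Sum>x\<in>X. (\<lambda>i. c x * x i)) | c. True}"

definition B_gen_matrix :: "nat \<Rightarrow> nat \<Rightarrow> (nat \<Rightarrow> nat \<Rightarrow> bit) \<Rightarrow> (nat \<Rightarrow> bit) set \<Rightarrow> bool" where
  "B_gen_matrix N k M B \<longleftrightarrow> (\<forall>i<k. M i \<in> Bvecs N) \<and> B = spanB (M ` {..<k})"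

text \<open>ext n c0 v c1 = (c0, v_1..v_n, c1, v_{n+1}..v_{2n}) (0-based indices).\<close>
definition ext :: "nat \<Rightarrow> E \<Rightarrow> (nat \<Rightarrow> E) \<Rightarrow> E \<Rightarrow> (nat \<Rightarrow> E)" where
  "ext n c0 v c1 = (\<lambda>j. if j = 0 then c0 else if j \<le> n then v (j - 1)
       else if j = n + 1 then c1 else if j \<le> 2*n + 1 then v (j - 2) else 0)"

end

theory Submission
  imports Defs "HOL-Library.FuncSet" HOL.Vector_Spaces
begin

(* Writing every element of E as u\<kappa> + v\<zeta>, an E-linear code C of length N is free exactly when
   C = \<kappa>A \<oplus> \<zeta>A for the binary code A = C_Res C.  For such codes everything is governed by A:
   the rank of C is dim A, the symplectic dual is \<kappa>A\<^sup>\<perp> \<oplus> \<zeta>A\<^sup>\<perp>, and the hull is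
   \<kappa>(A \<inter> A\<^sup>\<perp>) \<oplus> \<zeta>(A \<inter> A\<^sup>\<perp>).
   All rows of G' and H' are \<kappa>-multiples of binary vectors, so D is the free code over the
   binary span A' of the rows of G', which is {a(1,x,1) + (0,r,0) : a \<in> F\<^sub>2, r \<in> A}.  The
   symplectic form of the extended vectors is <(c,v,d), (c',v',d')> = cd' + dc' + <v,v'>, which
   gives A'\<^sup>\<perp> = {(a, w, a + <x,w>) : w \<in> A\<^sup>\<perp>}; since x \<in> A\<^sup>\<perp> and <x,x> = 0 the hull of A' is
   {a(1,x,1) + (0,r,0) : r \<in> A \<inter> A\<^sup>\<perp>}.  Both parametrisations are injective, so rank and
   hull-rank grow by one, and substituting w = ay + h shows that the rows of H' span A'\<^sup>\<perp>. *)

declare add_bit_eq_xor [simp del] mult_bit_eq_and [simp del]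

section \<open>Coordinates on E\<close>

fun zetaE :: "E \<Rightarrow> bit" where
  "zetaE E0 = 0" | "zetaE Kap = 0" | "zetaE Tau = 1" | "zetaE Zet = 1"

definition E_of :: "bit \<Rightarrow> bit \<Rightarrow> E" where
  "E_of u v = emb Kap u + emb Zet v"

lemma E_of_add: "E_of a b + E_of c d = E_of (a + c) (b + d)"
  by (cases a; cases b; cases c; cases d) (simp_all add: E_of_def emb_def zero_E_def)

lemma E_of_eq_0_iff [simp]: "E_of a b = 0 \<longleftrightarrow> a = 0 \<and> b = 0"
  by (cases a; cases b) (simp_all add: E_of_def emb_def zero_E_def)

lemma E_of_inject [simp]: "E_of a b = E_of c d \<longleftrightarrow> a = c \<and> b = d"
  by (cases a; cases b; cases c; cases d) (simp_all add: E_of_def emb_def zero_E_def)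

lemma piE_E_of [simp]: "piE (E_of a b) = a"
  by (cases a; cases b) (simp_all add: E_of_def emb_def zero_E_def)

lemma zetaE_E_of [simp]: "zetaE (E_of a b) = b"
  by (cases a; cases b) (simp_all add: E_of_def emb_def zero_E_def)

lemma E_of_piE_zetaE: "E_of (piE e) (zetaE e) = e"
  by (cases e) (simp_all add: E_of_def emb_def zero_E_def)

lemma times_E_of: "e * E_of a b = E_of (piE e * a) (zetaE e * a)"
  by (cases e; cases a; cases b) (simp_all add: E_of_def emb_def zero_E_def)

lemma emb_Kap: "emb Kap a = E_of a 0"
  by (simp add: E_of_def emb_def)

lemma emb_Zet: "emb Zet a = E_of 0 a"
  by (simp add: E_of_def emb_def)

lemma piE_add: "piE (a + b) = piE a + piE b"
  by (cases a; cases b) (simp_all add: zero_E_def)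

lemma sum_E_of: "(\<Sum>x\<in>X. E_of (f x) (g x)) = E_of (\<Sum>x\<in>X. f x) (\<Sum>x\<in>X. g x)"
  by (induction X rule: infinite_finite_induct) (simp_all add: E_of_add)

definition zetav :: "(nat \<Rightarrow> E) \<Rightarrow> (nat \<Rightarrow> bit)" where
  "zetav w = (\<lambda>i. zetaE (w i))"

definition Evec_of :: "(nat \<Rightarrow> bit) \<Rightarrow> (nat \<Rightarrow> bit) \<Rightarrow> (nat \<Rightarrow> E)" where
  "Evec_of a b = (\<lambda>i. E_of (a i) (b i))"

lemma Evec_of_add: "Evec_of a b + Evec_of c d = Evec_of (a + c) (b + d)"
  by (simp add: Evec_of_def fun_eq_iff E_of_add)

lemma Evec_of_inject [simp]: "Evec_of a b = Evec_of c d \<longleftrightarrow> a = c \<and> b = d"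
  by (auto simp: Evec_of_def fun_eq_iff)

lemma Evec_of_0 [simp]: "Evec_of 0 0 = 0"
  by (simp add: Evec_of_def fun_eq_iff)

lemma Evec_of_piv_zetav: "Evec_of (piv w) (zetav w) = w"
  by (simp add: Evec_of_def piv_def zetav_def E_of_piE_zetaE)

lemma Evec_of_cases:
  obtains a b where "w = Evec_of a b"
  using Evec_of_piv_zetav by metis

lemma piv_Evec_of [simp]: "piv (Evec_of a b) = a"
  by (simp add: Evec_of_def piv_def)

lemma zetav_Evec_of [simp]: "zetav (Evec_of a b) = b"
  by (simp add: Evec_of_def zetav_def)

lemma embv_Kap: "embv Kap v = Evec_of v 0"
  by (simp add: embv_def Evec_of_def emb_Kap)

lemma embv_Zet: "embv Zet v = Evec_of 0 v"
  by (simp add: embv_def Evec_of_def emb_Zet)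

lemma Esmult_Evec_of: "Esmult e (Evec_of a b) = Evec_of (\<lambda>i. piE e * a i) (\<lambda>i. zetaE e * a i)"
  by (simp add: Esmult_def Evec_of_def times_E_of)

lemma Bsmult_E_Evec_of: "Bsmult_E u (Evec_of a 0) = Evec_of (\<lambda>i. u * a i) 0"
  by (cases u) (simp_all add: Bsmult_E_def Evec_of_def fun_eq_iff)

lemma sum_Evec_of: "(\<Sum>x\<in>X. Evec_of (f x) (g x)) = Evec_of (\<Sum>x\<in>X. f x) (\<Sum>x\<in>X. g x)"
  by (induction X rule: infinite_finite_induct) (auto simp: Evec_of_def fun_eq_iff E_of_add)

lemma Evec_of_in_Evecs_iff: "Evec_of a b \<in> Evecs N \<longleftrightarrow> a \<in> Bvecs N \<and> b \<in> Bvecs N"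
  by (auto simp: Evec_of_def Evecs_def Bvecs_def)

lemma piv_add: "piv (a + b) = piv a + piv b"
  by (simp add: piv_def fun_eq_iff piE_add)

lemma piv_Esmult: "piv (Esmult e w) = (\<lambda>i. piE e * piv w i)"
  by (cases w rule: Evec_of_cases) (simp add: Esmult_Evec_of)

lemma UNIV_E: "(UNIV :: E set) = {E0, Kap, Tau, Zet}"
  by (auto intro: E.exhaust)

lemma sipE_Evec_of: "sipE n (Evec_of p q) (Evec_of a b) = E_of (sipB n p a) (sipB n q a)"
  by (simp add: sipE_def sipB_def Evec_of_def times_E_of sum_E_of E_of_add)

lemma bit_add_eq_0_iff [simp]: "(a::bit) + b = 0 \<longleftrightarrow> a = b"
  by (cases a; cases b) simp_all

lemma bvec_add_self [simp]: "(v :: nat \<Rightarrow> bit) + v = 0"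
  by (simp add: fun_eq_iff)

lemma combinations_eq_image_PiE:
  "{(\<Sum>x\<in>X. f (c x) x) | c. True} = (\<lambda>c. \<Sum>x\<in>X. f (c x) x) ` (X \<rightarrow>\<^sub>E UNIV)"
proof -
  have "(\<Sum>x\<in>X. f (c x) x) \<in> (\<lambda>c. \<Sum>x\<in>X. f (c x) x) ` (X \<rightarrow>\<^sub>E UNIV)" for c
  proof (rule image_eqI[where x = "restrict c X"])
    show "(\<Sum>x\<in>X. f (c x) x) = (\<Sum>x\<in>X. f (restrict c X x) x)"
      by (intro sum.cong) auto
  qed simp
  then show ?thesis
    by auto
qed

lemma card_combinations_le:
  fixes f :: "'c \<Rightarrow> 'a \<Rightarrow> 'b::comm_monoid_add"
  assumes "finite X" and "finite (UNIV :: 'c set)"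
  shows "card {(\<Sum>x\<in>X. f (c x) x) | c. True} \<le> card (UNIV :: 'c set) ^ card X"
proof -
  have "card {(\<Sum>x\<in>X. f (c x) x) | c. True} \<le> card (X \<rightarrow>\<^sub>E (UNIV :: 'c set))"
    unfolding combinations_eq_image_PiE using assms by (simp add: card_image_le finite_PiE)
  also have "\<dots> = card (UNIV :: 'c set) ^ card X"
    using assms(1) by (simp add: card_PiE)
  finally show ?thesis .
qed

global_interpretation bvec: vector_space "\<lambda>(c::bit) (v::nat \<Rightarrow> bit) i. c * v i"
  by unfold_locales (auto simp: fun_eq_iff algebra_simps)

lemma spanB_eq_span: "finite S \<Longrightarrow> spanB S = bvec.span S"
  unfolding bvec.span_finite spanB_def by auto

lemma UNIV_bit: "(UNIV :: bit set) = {0, 1}"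
  by auto

lemma finite_Bvecs: "finite (Bvecs N)"
proof -
  have "Bvecs N \<subseteq> (\<lambda>f i. if i < N then f i else 0) ` ({..<N} \<rightarrow>\<^sub>E UNIV)"
  proof
    fix v assume "v \<in> Bvecs N"
    then have "v = (\<lambda>i. if i < N then restrict v {..<N} i else 0)"
      by (auto simp: Bvecs_def fun_eq_iff)
    then show "v \<in> (\<lambda>f i. if i < N then f i else 0) ` ({..<N} \<rightarrow>\<^sub>E UNIV)"
      by (rule image_eqI[where x = "restrict v {..<N}"]) simp
  qed
  moreover have "finite ({..<N} \<rightarrow>\<^sub>E (UNIV :: bit set))"
    by (intro finite_PiE) (simp_all add: UNIV_bit)
  ultimately show ?thesis
    by (rule finite_subset[OF _ finite_imageI])
qed

lemma subspace_Bvecs: "bvec.subspace (Bvecs N)"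
  by (auto simp: bvec.subspace_def Bvecs_def)

lemma card_span_independent:
  assumes "finite B" and "bvec.independent B"
  shows "card (bvec.span B) = 2 ^ card B"
proof -
  let ?comb = "\<lambda>u. \<Sum>v\<in>B. (\<lambda>i. u v * v i)"
  have span_eq: "bvec.span B = ?comb ` (B \<rightarrow>\<^sub>E UNIV)"
    using combinations_eq_image_PiE[of "\<lambda>c v i. c * v i" B]
    unfolding bvec.span_finite[OF assms(1)] full_SetCompr_eq[symmetric] by simp
  have "inj_on ?comb (B \<rightarrow>\<^sub>E UNIV)"
  proof (rule inj_onI)
    fix u u' assume u: "u \<in> B \<rightarrow>\<^sub>E UNIV" and u': "u' \<in> B \<rightarrow>\<^sub>E UNIV" and eq: "?comb u = ?comb u'"
    have "(\<Sum>v\<in>B. (\<lambda>i. (u v + u' v) * v i)) = ?comb u + ?comb u'"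
      by (simp only: bvec.scale_left_distrib sum.distrib)
    also have "\<dots> = 0"
      using eq by (simp add: fun_eq_iff)
    finally have "u v + u' v = 0" if "v \<in> B" for v
      using bvec.independent_explicit_module[THEN iffD1, OF assms(2), rule_format,
          of B "\<lambda>v. u v + u' v"] assms(1) that by blast
    then show "u = u'"
      using PiE_ext[OF u u'] by simp
  qed
  then have "card (bvec.span B) = card (B \<rightarrow>\<^sub>E (UNIV :: bit set))"
    unfolding span_eq by (rule card_image)
  also have "\<dots> = 2 ^ card B"
    using assms(1) by (simp add: card_PiE UNIV_bit numeral_2_eq_2)
  finally show ?thesis .
qed

lemma card_subspace:
  assumes "bvec.subspace A" and "finite A"
  shows "card A = 2 ^ bvec.dim A"
proof -
  obtain B where B: "B \<subseteq> A" "bvec.independent B" "A \<subseteq> bvec.span B" "card B = bvec.dim A"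
    by (rule bvec.basis_exists)
  have "bvec.span B = A"
    using bvec.span_minimal[OF B(1) assms(1)] B(3) by blast
  moreover have "finite B"
    using B(1) assms(2) finite_subset by blast
  ultimately have "card A = 2 ^ card B"
    using card_span_independent B(2) by blast
  then show ?thesis
    using B(4) by simp
qed

lemma span_insert_additive_image:
  assumes add: "\<And>u v. f (u + v) = f u + f v"
  shows "bvec.span (insert r0 (f ` S)) = (\<lambda>(a, r). (\<lambda>i. a * r0 i) + f r) ` (UNIV \<times> bvec.span S)"
proof -
  have "f 0 = 0"
    using add[of 0 0] by simp
  then have "f (\<lambda>i. c * v i) = (\<lambda>i. c * f v i)" for c v
    by (cases c) (simp_all flip: zero_fun_def)
  then have "module_hom (\<lambda>(c::bit) (v::nat \<Rightarrow> bit) i. c * v i) (\<lambda>c v i. c * v i) f"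
    using add by (simp add: module_hom_iff bvec.module_axioms)
  then have "bvec.span (f ` S) = f ` bvec.span S"
    by (rule module_hom.span_image)
  then show ?thesis
    unfolding bvec.span_insert by (force simp: diff_eq_eq)
qed

lemma sipB_commute: "sipB n x y = sipB n y x"
  unfolding sipB_def by (simp add: add.commute mult.commute)

lemma sipB_self: "sipB n x x = 0"
  unfolding sipB_def by (simp add: mult.commute)

lemma sipB_add_right: "sipB n w (u + v) = sipB n w u + sipB n w v"
  unfolding sipB_def by (simp add: distrib_left sum.distrib algebra_simps)

lemma sipB_scale_right: "sipB n w (\<lambda>i. a * v i) = a * sipB n w v"
  unfolding sipB_def by (simp add: sum_distrib_left distrib_left algebra_simps)

lemma sipB_zero_right [simp]: "sipB n w 0 = 0"
  by (simp add: sipB_def)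

lemma sipB_zero_left [simp]: "sipB n 0 w = 0"
  by (simp add: sipB_def)

lemma sipB_add_left: "sipB n (u + v) w = sipB n u w + sipB n v w"
  by (simp add: sipB_commute[of n _ w] sipB_add_right)

lemma sipB_scale_left: "sipB n (\<lambda>i. a * v i) w = a * sipB n v w"
  by (simp add: sipB_commute[of n _ w] sipB_scale_right)

lemma subspace_sdualB: "bvec.subspace (sdualB n A)"
  by (auto simp: bvec.subspace_def sdualB_def Bvecs_def sipB_add_left sipB_scale_left)

lemma sdualB_subset_Bvecs: "sdualB n A \<subseteq> Bvecs (2*n)"
  by (auto simp: sdualB_def)

lemma sdualB_span: "sdualB n (bvec.span S) = sdualB n S"
proof
  show "sdualB n (bvec.span S) \<subseteq> sdualB n S"
    using bvec.span_superset by (auto simp: sdualB_def)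
next
  show "sdualB n S \<subseteq> sdualB n (bvec.span S)"
  proof
    fix z assume z: "z \<in> sdualB n S"
    have "bvec.subspace {v. sipB n z v = 0}"
      by (auto simp: bvec.subspace_def sipB_add_right sipB_scale_right)
    moreover have "S \<subseteq> {v. sipB n z v = 0}"
      using z by (auto simp: sdualB_def sipB_commute[of n z])
    ultimately have "bvec.span S \<subseteq> {v. sipB n z v = 0}"
      by (rule bvec.span_minimal[rotated])
    then show "z \<in> sdualB n (bvec.span S)"
      using z by (auto simp: sdualB_def sipB_commute[of n z])
  qed
qed

section \<open>Free codes and their residue codes\<close>

definition free_code_of :: "(nat \<Rightarrow> bit) set \<Rightarrow> (nat \<Rightarrow> E) set" where
  "free_code_of A = {Evec_of a b | a b. a \<in> A \<and> b \<in> A}"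

lemma Evec_of_in_free_code_of [simp]: "Evec_of a b \<in> free_code_of A \<longleftrightarrow> a \<in> A \<and> b \<in> A"
  by (simp add: free_code_of_def)

lemma free_code_ofE:
  assumes "w \<in> free_code_of A"
  obtains a b where "w = Evec_of a b" "a \<in> A" "b \<in> A"
  using assms by (auto simp: free_code_of_def)

lemma E_linear_code_free_code_of:
  assumes "bvec.subspace A" and "A \<subseteq> Bvecs N"
  shows "E_linear_code N (free_code_of A)"
  unfolding E_linear_code_def
proof (intro conjI ballI allI subsetI)
  fix w assume "w \<in> free_code_of A"
  then obtain a b where "w = Evec_of a b" "a \<in> A" "b \<in> A"
    by (rule free_code_ofE)
  then show "w \<in> Evecs N"
    using assms(2) by (auto simp: Evec_of_in_Evecs_iff)
next
  show "0 \<in> free_code_of A"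
    using bvec.subspace_0[OF assms(1)] Evec_of_in_free_code_of[of 0 0 A] by simp
next
  fix v w assume "v \<in> free_code_of A" "w \<in> free_code_of A"
  then show "v + w \<in> free_code_of A"
    using bvec.subspace_add[OF assms(1)]
    by (auto elim!: free_code_ofE simp: Evec_of_add)
next
  fix e w assume "w \<in> free_code_of A"
  then show "Esmult e w \<in> free_code_of A"
    using bvec.subspace_scale[OF assms(1)]
    by (auto elim!: free_code_ofE simp: Esmult_Evec_of)
qed

lemma C_Res_free_code_of:
  assumes "bvec.subspace A"
  shows "C_Res (free_code_of A) = A"
proof -
  have "a \<in> piv ` free_code_of A" if "a \<in> A" for a
    using that bvec.subspace_0[OF assms] by (intro rev_image_eqI[of "Evec_of a 0"]) simp_all
  then show ?thesis
    unfolding C_Res_def by (auto elim!: free_code_ofE)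
qed

lemma free_code_free_code_of:
  assumes "bvec.subspace A" and "A \<subseteq> Bvecs N"
  shows "free_code N (free_code_of A)"
  using assms bvec.subspace_0[OF assms(1)]
  by (auto simp: free_code_def C_Res_free_code_of C_Tor_def embv_Zet)

lemma E_linear_codeD:
  assumes "E_linear_code N C"
  shows "C \<subseteq> Evecs N" "0 \<in> C" "\<And>v w. v \<in> C \<Longrightarrow> w \<in> C \<Longrightarrow> v + w \<in> C"
    "\<And>e w. w \<in> C \<Longrightarrow> Esmult e w \<in> C"
  using assms by (auto simp: E_linear_code_def)

lemma subspace_C_Res:
  assumes "E_linear_code N C"
  shows "bvec.subspace (C_Res C)"
  unfolding bvec.subspace_def C_Res_def
proof (intro conjI allI impI ballI)
  have "piv 0 = 0"
    by (simp add: piv_def fun_eq_iff zero_E_def)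
  then show "0 \<in> piv ` C"
    using E_linear_codeD(2)[OF assms] by (intro rev_image_eqI[of 0]) simp_all
next
  fix a v assume "v \<in> piv ` C"
  then obtain w where w: "w \<in> C" "v = piv w"
    by blast
  have "piv (Esmult (E_of a 0) w) = (\<lambda>i. a * v i)"
    using w by (simp add: piv_Esmult)
  then show "(\<lambda>i. a * v i) \<in> piv ` C"
    using E_linear_codeD(4)[OF assms w(1)]
    by (intro rev_image_eqI[of "Esmult (E_of a 0) w"]) simp_all
next
  fix u v assume "u \<in> piv ` C" "v \<in> piv ` C"
  then show "u + v \<in> piv ` C"
    using E_linear_codeD(3)[OF assms] by (auto simp flip: piv_add)
qed

lemma C_Res_subset_Bvecs:
  assumes "E_linear_code N C"
  shows "C_Res C \<subseteq> Bvecs N"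
proof
  fix a assume "a \<in> C_Res C"
  then obtain w where w: "w \<in> C" "a = piv w"
    by (auto simp: C_Res_def)
  then have "Evec_of (piv w) (zetav w) \<in> Evecs N"
    using assms by (auto simp: E_linear_code_def Evec_of_piv_zetav)
  then show "a \<in> Bvecs N"
    using w by (simp add: Evec_of_in_Evecs_iff)
qed

lemma Evec_of_piv_in_code:
  assumes "E_linear_code N C" and "w \<in> C"
  shows "Evec_of (piv w) 0 \<in> C"
proof -
  have "Esmult Kap w = Evec_of (piv w) 0"
    by (cases w rule: Evec_of_cases) (simp add: Esmult_Evec_of flip: zero_fun_def)
  then show ?thesis
    using E_linear_codeD(4)[OF assms, of Kap] by simp
qed

lemma zetav_in_C_Res:
  assumes lin: "E_linear_code N C" and free: "free_code N C" and w: "w \<in> C"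
  shows "zetav w \<in> C_Res C"
proof -
  have "w + Evec_of (piv w) 0 = Evec_of 0 (zetav w)"
    by (cases w rule: Evec_of_cases) (simp add: Evec_of_add)
  then have "embv Zet (zetav w) \<in> C"
    using E_linear_codeD(3)[OF lin w Evec_of_piv_in_code[OF lin w]] by (simp add: embv_Zet)
  moreover have "Evec_of (piv w) (zetav w) \<in> Evecs N"
    using E_linear_codeD(1)[OF lin] w by (auto simp: Evec_of_piv_zetav)
  ultimately have "zetav w \<in> C_Tor N C"
    by (simp add: C_Tor_def Evec_of_in_Evecs_iff)
  then show ?thesis
    using free by (simp add: free_code_def)
qed

lemma free_code_eq_free_code_of:
  assumes lin: "E_linear_code N C" and free: "free_code N C"
  shows "C = free_code_of (C_Res C)"
proof
  show "C \<subseteq> free_code_of (C_Res C)"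
  proof
    fix w assume w: "w \<in> C"
    then have "Evec_of (piv w) (zetav w) \<in> free_code_of (C_Res C)"
      using zetav_in_C_Res[OF lin free w] by (simp add: C_Res_def)
    then show "w \<in> free_code_of (C_Res C)"
      by (simp add: Evec_of_piv_zetav)
  qed
next
  show "free_code_of (C_Res C) \<subseteq> C"
  proof
    fix w assume "w \<in> free_code_of (C_Res C)"
    then obtain a b where w: "w = Evec_of a b" "a \<in> C_Res C" "b \<in> C_Res C"
      by (rule free_code_ofE)
    obtain v where "v \<in> C" "a = piv v"
      using w(2) by (auto simp: C_Res_def)
    moreover have "Evec_of 0 b \<in> C"
      using free w(3) by (auto simp: free_code_def C_Tor_def embv_Zet)
    ultimately have "Evec_of a 0 + Evec_of 0 b \<in> C"
      using E_linear_codeD(3)[OF lin Evec_of_piv_in_code[OF lin]] by blast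
    then show "w \<in> C"
      using w(1) by (simp add: Evec_of_add)
  qed
qed

lemma spanE_embv_Kap:
  assumes "finite S"
  shows "spanE (embv Kap ` S) = free_code_of (bvec.span S)"
proof
  have inj: "inj_on (embv Kap) S"
    by (auto simp: inj_on_def embv_Kap)
  show "spanE (embv Kap ` S) \<subseteq> free_code_of (bvec.span S)"
  proof
    fix w assume "w \<in> spanE (embv Kap ` S)"
    then obtain c where "w = (\<Sum>v\<in>embv Kap ` S. Esmult (c v) v)"
      by (auto simp: spanE_def)
    also have "\<dots> = (\<Sum>s\<in>S. Evec_of (\<lambda>i. piE (c (embv Kap s)) * s i) (\<lambda>i. zetaE (c (embv Kap s)) * s i))"
      unfolding sum.reindex[OF inj] by (simp add: embv_Kap Esmult_Evec_of)
    finally show "w \<in> free_code_of (bvec.span S)"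
      using bvec.span_finite[OF assms] by (auto simp: sum_Evec_of)
  qed
  show "free_code_of (bvec.span S) \<subseteq> spanE (embv Kap ` S)"
  proof
    fix w assume "w \<in> free_code_of (bvec.span S)"
    then obtain u u' where w: "w = Evec_of (\<Sum>s\<in>S. (\<lambda>i. u s * s i)) (\<Sum>s\<in>S. (\<lambda>i. u' s * s i))"
      by (auto elim!: free_code_ofE simp: bvec.span_finite[OF assms])
    define c where "c v = E_of (u (piv v)) (u' (piv v))" for v
    have "(\<Sum>v\<in>embv Kap ` S. Esmult (c v) v) = (\<Sum>s\<in>S. Evec_of (\<lambda>i. u s * s i) (\<lambda>i. u' s * s i))"
      unfolding sum.reindex[OF inj] by (simp add: c_def embv_Kap Esmult_Evec_of)
    also have "\<dots> = w"
      by (simp add: w sum_Evec_of)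
    finally show "w \<in> spanE (embv Kap ` S)"
      unfolding spanE_def by blast
  qed
qed

lemma spanF2_E_embv_Kap_subset:
  assumes "finite S"
  shows "spanF2_E (embv Kap ` S) \<subseteq> free_code_of (bvec.span S)"
proof
  have inj: "inj_on (embv Kap) S"
    by (auto simp: inj_on_def embv_Kap)
  fix w assume "w \<in> spanF2_E (embv Kap ` S)"
  then obtain c where "w = (\<Sum>v\<in>embv Kap ` S. Bsmult_E (c v) v)"
    by (auto simp: spanF2_E_def)
  also have "\<dots> = (\<Sum>s\<in>S. Evec_of (\<lambda>i. c (embv Kap s) * s i) 0)"
    unfolding sum.reindex[OF inj] by (simp add: embv_Kap Bsmult_E_Evec_of)
  finally show "w \<in> free_code_of (bvec.span S)"
    using bvec.span_finite[OF assms] by (auto simp: sum_Evec_of bvec.span_zero)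
qed

lemma gen_code_embv_Kap:
  assumes "finite S"
  shows "gen_code (embv Kap ` S) = free_code_of (bvec.span S)"
  unfolding gen_code_def using spanE_embv_Kap[OF assms] spanF2_E_embv_Kap_subset[OF assms] by blast

lemma card_free_code_of: "card (free_code_of A) = card A * card A"
proof -
  have "free_code_of A = (\<lambda>(a, b). Evec_of a b) ` (A \<times> A)"
    by (auto simp: free_code_of_def)
  moreover have "inj_on (\<lambda>(a, b). Evec_of a b) (A \<times> A)"
    by (auto simp: inj_on_def)
  ultimately show ?thesis
    by (simp add: card_image card_cartesian_product)
qed

lemma card_gen_code_le:
  assumes "finite X"
  shows "card (gen_code X) \<le> 4 ^ card X + 2 ^ card X"
proof -
  have "card (spanE X) \<le> 4 ^ card X"
    using card_combinations_le[of X Esmult] assms by (simp add: spanE_def UNIV_E eval_nat_numeral)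
  moreover have "card (spanF2_E X) \<le> 2 ^ card X"
    using card_combinations_le[of X Bsmult_E] assms by (simp add: spanF2_E_def UNIV_bit eval_nat_numeral)
  ultimately show ?thesis
    unfolding gen_code_def by (meson add_mono card_Un_le order_trans)
qed

lemma pow4_plus_pow2_less:
  assumes "r < d"
  shows "4 ^ r + 2 ^ r < (4::nat) ^ d"
proof -
  have "(2::nat) ^ r \<le> 4 ^ r"
    by (rule power_mono) simp_all
  moreover have "0 < (4::nat) ^ r"
    by simp
  ultimately have "4 ^ r + 2 ^ r < 4 * (4::nat) ^ r"
    by linarith
  also have "\<dots> = 4 ^ Suc r"
    by simp
  also have "\<dots> \<le> 4 ^ d"
    using assms by (intro power_increasing) simp_all
  finally show ?thesis .
qed

text \<open>The lower bound counts codewords: a generating set \<open>X\<close> produces at most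
  \<open>4^|X| + 2^|X|\<close> of them, fewer than \<open>4^(dim A)\<close> if \<open>|X| < dim A\<close>.\<close>

lemma rank_code_free_code_of:
  assumes "bvec.subspace A" and "A \<subseteq> Bvecs N"
  shows "rank_code N (free_code_of A) = bvec.dim A"
proof -
  let ?d = "bvec.dim A"
  have fin_A: "finite A"
    using assms(2) finite_Bvecs by (rule finite_subset)
  obtain B where B: "B \<subseteq> A" "bvec.independent B" "A \<subseteq> bvec.span B" "card B = ?d"
    by (rule bvec.basis_exists)
  have span_B: "bvec.span B = A"
    using bvec.span_minimal[OF B(1) assms(1)] B(3) by blast
  have fin_B: "finite B"
    using B(1) fin_A by (simp add: finite_subset)
  show ?thesis
    unfolding rank_code_def
  proof (rule Least_equality)
    show "\<exists>X\<subseteq>Evecs N. generates X (free_code_of A) \<and> card X = ?d"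
    proof (intro exI conjI)
      show "embv Kap ` B \<subseteq> Evecs N"
        using B(1) assms(2) by (auto simp: embv_Kap Evec_of_in_Evecs_iff Bvecs_def)
      show "generates (embv Kap ` B) (free_code_of A)"
        using fin_B by (simp add: generates_def gen_code_embv_Kap span_B)
      show "card (embv Kap ` B) = ?d"
        using B(4) by (simp add: card_image inj_on_def embv_Kap)
    qed
  next
    fix r assume "\<exists>X\<subseteq>Evecs N. generates X (free_code_of A) \<and> card X = r"
    then obtain X where X: "finite X" "free_code_of A = gen_code X" "card X = r"
      by (auto simp: generates_def)
    have "(4::nat) ^ ?d = 2 ^ ?d * 2 ^ ?d"
      by (simp add: power_mult_distrib[symmetric])
    also have "\<dots> = card (free_code_of A)"
      using card_subspace[OF assms(1) fin_A] by (simp add: card_free_code_of)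
    also have "\<dots> \<le> 4 ^ r + 2 ^ r"
      using card_gen_code_le[OF X(1)] X(2,3) by simp
    finally show "?d \<le> r"
      using pow4_plus_pow2_less[of r ?d] by linarith
  qed
qed

lemma ball_free_code_of: "(\<forall>w\<in>free_code_of A. P w) \<longleftrightarrow> (\<forall>a\<in>A. \<forall>b\<in>A. P (Evec_of a b))"
  by (auto simp: free_code_of_def)

lemma sdualE_free_code_of:
  assumes "0 \<in> A"
  shows "sdualE n (free_code_of A) = free_code_of (sdualB n A)"
proof (intro set_eqI)
  fix z :: "nat \<Rightarrow> E"
  obtain p q where z: "z = Evec_of p q"
    by (rule Evec_of_cases)
  have "(\<forall>w\<in>free_code_of A. sipE n z w = 0 \<and> sipE n w z = 0) \<longleftrightarrow>
      (\<forall>a\<in>A. \<forall>b\<in>A. sipB n p a = 0 \<and> sipB n q a = 0 \<and> sipB n a p = 0 \<and> sipB n b p = 0)"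
    unfolding ball_free_code_of by (simp add: z sipE_Evec_of)
  also have "\<dots> \<longleftrightarrow> (\<forall>a\<in>A. sipB n p a = 0 \<and> sipB n q a = 0)"
    using assms by (auto simp: sipB_commute[of n _ p])
  finally show "z \<in> sdualE n (free_code_of A) \<longleftrightarrow> z \<in> free_code_of (sdualB n A)"
    by (auto simp: sdualE_def sdualB_def z Evec_of_in_Evecs_iff)
qed

lemma free_code_of_Int: "free_code_of A \<inter> free_code_of B = free_code_of (A \<inter> B)"
  by (auto simp: free_code_of_def)

lemma SHull_free_code_of:
  assumes "0 \<in> A"
  shows "SHull n (free_code_of A) = free_code_of (A \<inter> sdualB n A)"
  using assms by (simp add: SHull_def sdualE_free_code_of free_code_of_Int)

lemma hull_rank_free_code_of:
  assumes "bvec.subspace A" and "A \<subseteq> Bvecs (2*n)"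
  shows "hull_rank n (free_code_of A) = bvec.dim (A \<inter> sdualB n A)"
  unfolding hull_rank_def SHull_free_code_of[OF bvec.subspace_0[OF assms(1)]]
  using assms by (intro rank_code_free_code_of bvec.subspace_inter subspace_sdualB) auto

section \<open>Extending binary vectors by two coordinates\<close>

definition extB :: "nat \<Rightarrow> bit \<Rightarrow> (nat \<Rightarrow> bit) \<Rightarrow> bit \<Rightarrow> (nat \<Rightarrow> bit)" where
  "extB n c0 v c1 = (\<lambda>j. if j = 0 then c0 else if j \<le> n then v (j - 1)
       else if j = n + 1 then c1 else if j \<le> 2*n + 1 then v (j - 2) else 0)"

lemma ext_embv_Kap:
  "ext n Kap (embv Kap v) (emb Kap c) = embv Kap (extB n 1 v c)"
  "ext n 0 (embv Kap v) (emb Kap c) = embv Kap (extB n 0 v c)"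
  by (simp_all add: ext_def extB_def embv_def emb_def fun_eq_iff)

lemma extB_add: "extB n c0 v c1 + extB n d0 w d1 = extB n (c0 + d0) (v + w) (c1 + d1)"
  by (simp add: extB_def fun_eq_iff)

lemma extB_scale: "(\<lambda>i. a * extB n c0 v c1 i) = extB n (a * c0) (\<lambda>i. a * v i) (a * c1)"
  by (simp add: extB_def fun_eq_iff)

lemma extB_in_Bvecs: "extB n c0 v c1 \<in> Bvecs (2*(n+1))"
  by (simp add: extB_def Bvecs_def)

lemma extB_inject:
  assumes "v \<in> Bvecs (2*n)" and "w \<in> Bvecs (2*n)"
  shows "extB n c0 v c1 = extB n d0 w d1 \<longleftrightarrow> c0 = d0 \<and> v = w \<and> c1 = d1"
proof
  assume eq: "extB n c0 v c1 = extB n d0 w d1"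
  have "v i = w i" for i
  proof -
    consider "i < n" | "n \<le> i" "i < 2*n" | "2*n \<le> i"
      by linarith
    then show ?thesis
    proof cases
      case 1
      then show ?thesis using fun_cong[OF eq, of "Suc i"] by (simp add: extB_def)
    next
      case 2
      then show ?thesis using fun_cong[OF eq, of "i + 2"] by (simp add: extB_def)
    next
      case 3
      then show ?thesis using assms by (simp add: Bvecs_def)
    qed
  qed
  then show "c0 = d0 \<and> v = w \<and> c1 = d1"
    using fun_cong[OF eq, of 0] fun_cong[OF eq, of "Suc n"] by (auto simp: extB_def)
qed simp

lemma Bvecs_extB_cases:
  assumes "u \<in> Bvecs (2*(n+1))"
  obtains c0 v c1 where "v \<in> Bvecs (2*n)" "u = extB n c0 v c1"
proof
  let ?v = "\<lambda>i. if i < n then u (i + 1) else if i < 2*n then u (i + 2) else 0"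
  show "?v \<in> Bvecs (2*n)"
    by (simp add: Bvecs_def)
  have "u j = extB n (u 0) ?v (u (Suc n)) j" for j
  proof -
    have "\<not> j \<le> n \<Longrightarrow> j \<noteq> Suc n \<Longrightarrow> Suc (Suc (j - 2)) = j"
      by arith
    then show ?thesis
      using assms by (cases "j = 0") (auto simp: extB_def Bvecs_def)
  qed
  then show "u = extB n (u 0) ?v (u (Suc n))"
    by blast
qed

lemma sipB_extB:
  "sipB (Suc n) (extB n c0 v c1) (extB n d0 w d1) = c0 * d1 + c1 * d0 + sipB n v w"
proof -
  let ?u = "extB n c0 v c1" and ?w = "extB n d0 w d1"
  have "(\<Sum>i<Suc n. ?u i * ?w (Suc n + i)) = c0 * d1 + (\<Sum>i<n. v i * w (n + i))"
    unfolding sum.lessThan_Suc_shift by (simp add: extB_def)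
  moreover have "(\<Sum>i<Suc n. ?u (Suc n + i) * ?w i) = c1 * d0 + (\<Sum>i<n. v (n + i) * w i)"
    unfolding sum.lessThan_Suc_shift by (simp add: extB_def)
  ultimately show ?thesis
    unfolding sipB_def by (simp add: algebra_simps)
qed

text \<open>\<open>extended_code n x A\<close> is the span of \<open>(1,x,1)\<close> and the vectors \<open>(0,r,0)\<close>, \<open>r \<in> A\<close>, i.e. the
  residue code of \<open>D\<close>; \<open>extended_dual n x B\<close> describes its symplectic dual for \<open>B = A\<^sup>\<perp>\<close>, the last
  coordinate being forced by orthogonality to \<open>(1,x,1)\<close>.\<close>

definition extended_code :: "nat \<Rightarrow> (nat \<Rightarrow> bit) \<Rightarrow> (nat \<Rightarrow> bit) set \<Rightarrow> (nat \<Rightarrow> bit) set" where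
  "extended_code n x A = (\<lambda>(a, r). extB n a ((\<lambda>i. a * x i) + r) a) ` (UNIV \<times> A)"

definition extended_dual :: "nat \<Rightarrow> (nat \<Rightarrow> bit) \<Rightarrow> (nat \<Rightarrow> bit) set \<Rightarrow> (nat \<Rightarrow> bit) set" where
  "extended_dual n x B = (\<lambda>(a, w). extB n a w (a + sipB n x w)) ` (UNIV \<times> B)"

lemma span_extended_rows:
  "bvec.span (insert (extB n 1 x 1) ((\<lambda>r. extB n 0 r 0) ` S)) = extended_code n x (bvec.span S)"
  unfolding extended_code_def
  by (subst span_insert_additive_image) (simp_all add: extB_add extB_scale)

lemma span_extended_dual_rows:
  assumes "y \<in> bvec.span S"
  shows "bvec.span (insert (extB n 1 y (1 + sipB n x y)) ((\<lambda>h. extB n 0 h (sipB n x h)) ` S)) =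
    extended_dual n x (bvec.span S)"
proof -
  let ?F = "\<lambda>(a, h). (\<lambda>i. a * extB n 1 y (1 + sipB n x y) i) + extB n 0 h (sipB n x h)"
  let ?G = "\<lambda>(a, w). extB n a w (a + sipB n x w)"
  have F_eq: "?F (a, h) = ?G (a, (\<lambda>i. a * y i) + h)" for a h
    by (simp add: extB_scale extB_add sipB_add_right sipB_scale_right algebra_simps)
  have shift: "(\<lambda>i. a * y i) + h \<in> bvec.span S" if "h \<in> bvec.span S" for a h
    using assms that by (simp add: bvec.span_add bvec.span_scale)
  have "?F ` (UNIV \<times> bvec.span S) = ?G ` (UNIV \<times> bvec.span S)"
  proof (intro equalityI subsetI)
    fix u assume "u \<in> ?F ` (UNIV \<times> bvec.span S)"
    then obtain a h where "h \<in> bvec.span S" "u = ?F (a, h)"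
      by blast
    then show "u \<in> ?G ` (UNIV \<times> bvec.span S)"
      using shift F_eq by blast
  next
    fix u assume "u \<in> ?G ` (UNIV \<times> bvec.span S)"
    then obtain a w where "w \<in> bvec.span S" "u = ?G (a, w)"
      by blast
    moreover have "?G (a, w) = ?F (a, (\<lambda>i. a * y i) + w)"
      using F_eq[of a "(\<lambda>i. a * y i) + w"] by (simp add: add.assoc[symmetric])
    ultimately show "u \<in> ?F ` (UNIV \<times> bvec.span S)"
      using shift by blast
  qed
  then show ?thesis
    unfolding extended_dual_def by (simp add: span_insert_additive_image extB_add sipB_add_right)
qed

lemma extended_code_subset_Bvecs: "extended_code n x A \<subseteq> Bvecs (2*(n+1))"
  unfolding extended_code_def by (rule image_subsetI, clarify, rule extB_in_Bvecs)

lemma subspace_extended_code: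
  assumes "bvec.subspace A"
  shows "bvec.subspace (extended_code n x A)"
proof -
  have "extended_code n x A = bvec.span (insert (extB n 1 x 1) ((\<lambda>r. extB n 0 r 0) ` A))"
    using span_extended_rows[of n x A] bvec.span_eq_iff[THEN iffD2, OF assms] by simp
  then show ?thesis
    by simp
qed

lemma card_extended_code:
  assumes "A \<subseteq> Bvecs (2*n)" and "x \<in> Bvecs (2*n)"
  shows "card (extended_code n x A) = 2 * card A"
proof -
  have "(\<lambda>i. a * x i) + r \<in> Bvecs (2*n)" if "r \<in> A" for a r
    using assms that bvec.subspace_add[OF subspace_Bvecs] bvec.subspace_scale[OF subspace_Bvecs] by blast
  then have "inj_on (\<lambda>(a, r). extB n a ((\<lambda>i. a * x i) + r) a) (UNIV \<times> A)"
    by (auto simp: inj_on_def extB_inject)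
  then show ?thesis
    by (simp add: extended_code_def card_image card_cartesian_product UNIV_bit)
qed

lemma dim_extended_code:
  assumes "bvec.subspace A" and "A \<subseteq> Bvecs (2*n)" and "x \<in> Bvecs (2*n)"
  shows "bvec.dim (extended_code n x A) = bvec.dim A + 1"
proof -
  have "finite A" "finite (extended_code n x A)"
    using finite_subset[OF assms(2) finite_Bvecs] finite_subset[OF extended_code_subset_Bvecs finite_Bvecs]
    by blast+
  then have "2 ^ bvec.dim (extended_code n x A) = (2::nat) ^ (bvec.dim A + 1)"
    using card_extended_code[OF assms(2,3)] card_subspace subspace_extended_code assms(1) by simp
  then show ?thesis
    using power_inject_exp[of "2::nat" _ "bvec.dim A + 1"] by simp
qed

lemma sdualB_extended_code:
  assumes "0 \<in> A"
  shows "sdualB (n+1) (extended_code n x A) = extended_dual n x (sdualB n A)"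
proof (intro equalityI subsetI)
  fix u assume u: "u \<in> sdualB (n+1) (extended_code n x A)"
  then have "u \<in> Bvecs (2*(n+1))"
    unfolding sdualB_def by blast
  then obtain c0 w c1 where w: "w \<in> Bvecs (2*n)" and u_eq: "u = extB n c0 w c1"
    by (rule Bvecs_extB_cases)
  have orth: "sipB (n+1) u (extB n a ((\<lambda>i. a * x i) + r) a) = 0" if "r \<in> A" for a r
    using u that by (force simp: sdualB_def extended_code_def)
  have "sipB n w r = 0" if "r \<in> A" for r
    using orth[OF that, of 0] by (simp add: u_eq sipB_extB flip: zero_fun_def)
  then have "w \<in> sdualB n A"
    using w by (simp add: sdualB_def)
  moreover have "c0 + c1 = sipB n x w"
    using orth[OF assms, of 1] by (simp add: u_eq sipB_extB sipB_commute[of n w])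
  then have "c1 = c0 + sipB n x w"
    by (cases c0; cases c1) simp_all
  ultimately show "u \<in> extended_dual n x (sdualB n A)"
    unfolding extended_dual_def u_eq by (intro rev_image_eqI[of "(c0, w)"]) simp_all
next
  fix u assume "u \<in> extended_dual n x (sdualB n A)"
  then obtain a w where w: "w \<in> sdualB n A" and u_eq: "u = extB n a w (a + sipB n x w)"
    by (auto simp: extended_dual_def)
  have "sipB (n+1) u (extB n b ((\<lambda>i. b * x i) + r) b) = 0" if "r \<in> A" for b r
    using w that
    by (simp add: u_eq sipB_extB sipB_add_right sipB_scale_right sdualB_def sipB_commute[of n w] algebra_simps)
  then show "u \<in> sdualB (n+1) (extended_code n x A)"
    using extB_in_Bvecs[of n a w] by (auto simp: sdualB_def extended_code_def u_eq)
qed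

lemma extended_code_Int_sdualB:
  assumes A: "bvec.subspace A" "A \<subseteq> Bvecs (2*n)" and x: "x \<in> sdualB n A"
  shows "extended_code n x A \<inter> sdualB (n+1) (extended_code n x A) = extended_code n x (A \<inter> sdualB n A)"
proof -
  have x_orth: "sipB n x r = 0" if "r \<in> A" for r
    using x that by (simp add: sdualB_def sipB_commute[of n x])
  have shift_in_sdualB: "(\<lambda>i. a * x i) + r \<in> sdualB n A \<longleftrightarrow> r \<in> sdualB n A" for a r
  proof -
    have ax: "(\<lambda>i. a * x i) \<in> sdualB n A"
      using bvec.subspace_scale[OF subspace_sdualB x] .
    have "r = (\<lambda>i. a * x i) + ((\<lambda>i. a * x i) + r)"
      by (simp add: add.assoc[symmetric])
    then show ?thesis
      using bvec.subspace_add[OF subspace_sdualB ax] by metis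
  qed
  have x_Bvecs: "x \<in> Bvecs (2*n)"
    using x sdualB_subset_Bvecs by blast
  have shift_in_Bvecs: "(\<lambda>i. a * x i) + r \<in> Bvecs (2*n)" if "r \<in> A" for a r
    using bvec.subspace_add[OF subspace_Bvecs bvec.subspace_scale[OF subspace_Bvecs x_Bvecs]] A(2) that
    by blast
  show ?thesis
    unfolding sdualB_extended_code[OF bvec.subspace_0[OF A(1)]]
  proof (intro equalityI subsetI)
    fix u assume u: "u \<in> extended_code n x A \<inter> extended_dual n x (sdualB n A)"
    then obtain a r where r: "r \<in> A" and u1: "u = extB n a ((\<lambda>i. a * x i) + r) a"
      by (auto simp: extended_code_def)
    obtain b w where w: "w \<in> sdualB n A" and u2: "u = extB n b w (b + sipB n x w)"
      using u by (auto simp: extended_dual_def)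
    have "w \<in> Bvecs (2*n)"
      using w sdualB_subset_Bvecs by blast
    then have "w = (\<lambda>i. a * x i) + r"
      using u1 u2 extB_inject[OF shift_in_Bvecs[OF r]] by metis
    then have "r \<in> sdualB n A"
      using w shift_in_sdualB by simp
    then show "u \<in> extended_code n x (A \<inter> sdualB n A)"
      using r u1 by (auto simp: extended_code_def)
  next
    fix u assume "u \<in> extended_code n x (A \<inter> sdualB n A)"
    then obtain a r where r: "r \<in> A" "r \<in> sdualB n A" and u: "u = extB n a ((\<lambda>i. a * x i) + r) a"
      by (auto simp: extended_code_def)
    have "a + sipB n x ((\<lambda>i. a * x i) + r) = a"
      using x_orth[OF r(1)] by (simp add: sipB_add_right sipB_scale_right sipB_self)
    then have "u \<in> extended_dual n x (sdualB n A)"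
      unfolding extended_dual_def u using r(2) shift_in_sdualB
      by (intro rev_image_eqI[of "(a, (\<lambda>i. a * x i) + r)"]) simp_all
    moreover have "u \<in> extended_code n x A"
      using r(1) u by (auto simp: extended_code_def)
    ultimately show "u \<in> extended_code n x A \<inter> extended_dual n x (sdualB n A)"
      by blast
  qed
qed

lemma free_extended_code:
  assumes A: "bvec.subspace A" "A \<subseteq> Bvecs (2*n)" and x: "x \<in> sdualB n A"
  defines "D \<equiv> free_code_of (extended_code n x A)"
  shows "E_linear_code (2*(n+1)) D" and "free_code (2*(n+1)) D"
    and "rank_code (2*(n+1)) D = bvec.dim A + 1"
    and "hull_rank (n+1) D = bvec.dim (A \<inter> sdualB n A) + 1"
proof -
  have x_Bvecs: "x \<in> Bvecs (2*n)"
    using x sdualB_subset_Bvecs by blast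
  have E: "bvec.subspace (extended_code n x A)" "extended_code n x A \<subseteq> Bvecs (2*(n+1))"
    using subspace_extended_code[OF A(1)] extended_code_subset_Bvecs .
  show "E_linear_code (2*(n+1)) D" "free_code (2*(n+1)) D"
    unfolding D_def using E by (rule E_linear_code_free_code_of, rule free_code_free_code_of)
  show "rank_code (2*(n+1)) D = bvec.dim A + 1"
    unfolding D_def using E A x_Bvecs by (simp add: rank_code_free_code_of dim_extended_code)
  have hull: "bvec.subspace (A \<inter> sdualB n A)" "A \<inter> sdualB n A \<subseteq> Bvecs (2*n)"
    using A by (auto intro: bvec.subspace_inter subspace_sdualB)
  show "hull_rank (n+1) D = bvec.dim (A \<inter> sdualB n A) + 1"
    unfolding D_def hull_rank_free_code_of[OF E] extended_code_Int_sdualB[OF A x]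
    using hull x_Bvecs by (rule dim_extended_code)
qed

lemma image_lessThan_Suc_shift:
  "(\<lambda>i. if i = 0 then a else f (i - 1)) ` {..<Suc k} = insert a (f ` {..<k})"
  unfolding lessThan_Suc_eq_insert_0 image_insert image_image by simp

lemma gen_code_extended_rows:
  assumes "finite S"
  shows "gen_code (insert (ext n Kap (embv Kap x) Kap) ((\<lambda>r. ext n 0 (embv Kap r) 0) ` S)) =
    free_code_of (extended_code n x (bvec.span S))"
proof -
  have "insert (ext n Kap (embv Kap x) Kap) ((\<lambda>r. ext n 0 (embv Kap r) 0) ` S) =
      embv Kap ` insert (extB n 1 x 1) ((\<lambda>r. extB n 0 r 0) ` S)"
    using ext_embv_Kap[of n _ 1] ext_embv_Kap[of n _ 0] by (simp add: emb_def image_image)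
  then show ?thesis
    using gen_code_embv_Kap[of "insert (extB n 1 x 1) ((\<lambda>r. extB n 0 r 0) ` S)"] assms
    by (simp add: span_extended_rows)
qed

lemma gen_code_extended_dual_rows:
  assumes "finite S" and "y \<in> bvec.span S"
  shows "gen_code (insert (ext n Kap (embv Kap y) (emb Kap (1 + sipB n x y)))
      ((\<lambda>h. ext n 0 (embv Kap h) (emb Kap (sipB n x h))) ` S)) =
    free_code_of (extended_dual n x (bvec.span S))"
  using gen_code_embv_Kap[of "insert (extB n 1 y (1 + sipB n x y)) ((\<lambda>h. extB n 0 h (sipB n x h)) ` S)"]
    assms by (simp add: ext_embv_Kap image_image span_extended_dual_rows)

lemma sdualE_free_extended_code:
  assumes "bvec.subspace A" and "finite S" and "bvec.span S = sdualB n A" and "y \<in> sdualB n A"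
  shows "sdualE (n+1) (free_code_of (extended_code n x A)) =
    gen_code (insert (ext n Kap (embv Kap y) (emb Kap (1 + sipB n x y)))
      ((\<lambda>h. ext n 0 (embv Kap h) (emb Kap (sipB n x h))) ` S))"
proof -
  have "sdualE (n+1) (free_code_of (extended_code n x A)) =
      free_code_of (sdualB (n+1) (extended_code n x A))"
    using subspace_extended_code[OF assms(1)] by (intro sdualE_free_code_of bvec.subspace_0)
  also have "\<dots> = free_code_of (extended_dual n x (sdualB n A))"
    using bvec.subspace_0[OF assms(1)] by (simp only: sdualB_extended_code)
  also have "\<dots> = gen_code (insert (ext n Kap (embv Kap y) (emb Kap (1 + sipB n x y)))
      ((\<lambda>h. ext n 0 (embv Kap h) (emb Kap (sipB n x h))) ` S))"
    using gen_code_extended_dual_rows assms(2-4) by simp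
  finally show ?thesis .
qed

theorem mainTheorem3:
  fixes n k l :: nat
    and C :: "(nat \<Rightarrow> E) set"
    and G :: "nat \<Rightarrow> nat \<Rightarrow> bit"
    and x :: "nat \<Rightarrow> bit"
    and H :: "nat \<Rightarrow> nat \<Rightarrow> bit"
    and y :: "nat \<Rightarrow> bit"
    and G' :: "nat \<Rightarrow> nat \<Rightarrow> E"
    and D :: "(nat \<Rightarrow> E) set"
  assumes C_lin: "E_linear_code (2*n) C"
    and C_free: "free_code (2*n) C"
    and C_rank: "rank_code (2*n) C = k"
    and C_hull: "hull_rank n C = l"
    and G_gen: "B_gen_matrix (2*n) k G (C_Res C)"
    and x_vec: "x \<in> Bvecs (2*n)"
    and x_orth: "\<forall>i<k. sipB n x (G i) = 0"
  defines "G' \<equiv> (\<lambda>i. if i = 0 then ext n Kap (embv Kap x) Kap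
                     else ext n 0 (embv Kap (G (i - 1))) 0)"
    and "D \<equiv> gen_code (G' ` {..<k+1})"
  shows "(E_linear_code (2*(n+1)) D \<and> free_code (2*(n+1)) D \<and>
          rank_code (2*(n+1)) D = k + 1 \<and> hull_rank (n+1) D = l + 1) \<and>
         (B_gen_matrix (2*n) (2*n - k) H (sdualB n (C_Res C)) \<longrightarrow>
          y \<in> sdualB n (C_Res C) \<longrightarrow>
          E_gen_matrix (2*n - k + 1)
            (\<lambda>j. if j = 0 then ext n Kap (embv Kap y) (emb Kap (1 + sipB n x y))
                 else ext n 0 (embv Kap (H (j - 1))) (emb Kap (sipB n x (H (j - 1)))))
            (sdualE (n+1) D))"
proof -
  define A where "A = C_Res C"
  have A: "bvec.subspace A" "A \<subseteq> Bvecs (2*n)"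
    unfolding A_def using subspace_C_Res[OF C_lin] C_Res_subset_Bvecs[OF C_lin] .
  have C_eq: "C = free_code_of A"
    unfolding A_def by (rule free_code_eq_free_code_of[OF C_lin C_free])
  have span_G: "bvec.span (G ` {..<k}) = A"
    using G_gen by (simp add: A_def B_gen_matrix_def spanB_eq_span)
  have x: "x \<in> sdualB n A"
    unfolding span_G[symmetric] sdualB_span using x_vec x_orth by (auto simp: sdualB_def)
  have D_eq: "D = free_code_of (extended_code n x A)"
    unfolding D_def G'_def Suc_eq_plus1[symmetric] image_lessThan_Suc_shift[of _ "\<lambda>j. ext n 0 (embv Kap (G j)) 0"]
    using gen_code_extended_rows[of "G ` {..<k}" n x] by (simp add: image_image span_G)
  have "bvec.dim A = k" "bvec.dim (A \<inter> sdualB n A) = l"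
    using C_rank C_hull A by (simp_all add: C_eq rank_code_free_code_of hull_rank_free_code_of)
  then have "E_linear_code (2*(n+1)) D \<and> free_code (2*(n+1)) D \<and>
      rank_code (2*(n+1)) D = k + 1 \<and> hull_rank (n+1) D = l + 1"
    unfolding D_eq using free_extended_code[OF A x] by simp
  moreover have "E_gen_matrix (2*n - k + 1)
      (\<lambda>j. if j = 0 then ext n Kap (embv Kap y) (emb Kap (1 + sipB n x y))
           else ext n 0 (embv Kap (H (j - 1))) (emb Kap (sipB n x (H (j - 1)))))
      (sdualE (n+1) D)"
    if H_gen: "B_gen_matrix (2*n) (2*n - k) H (sdualB n (C_Res C))" and y: "y \<in> sdualB n (C_Res C)"
  proof -
    have span_H: "bvec.span (H ` {..<2*n - k}) = sdualB n A"
      using H_gen by (simp add: A_def B_gen_matrix_def spanB_eq_span)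
    have "sdualE (n+1) D = gen_code (insert (ext n Kap (embv Kap y) (emb Kap (1 + sipB n x y)))
        ((\<lambda>j. ext n 0 (embv Kap (H j)) (emb Kap (sipB n x (H j)))) ` {..<2*n - k}))"
      unfolding D_eq using sdualE_free_extended_code[OF A(1) _ span_H] y by (simp add: A_def image_image)
    then show ?thesis
      unfolding E_gen_matrix_def generates_def Suc_eq_plus1[symmetric]
        image_lessThan_Suc_shift[of _ "\<lambda>j. ext n 0 (embv Kap (H j)) (emb Kap (sipB n x (H j)))"]
      by simp
  qed
  ultimately show ?thesis
    by blast
qed

end
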